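(* Let $(E,\langle\cdot,\cdot\rangle,\rho)$ be a Courant vector bundle over $M$ and let $\circ$ and $\tilde\circ$ be two pre-Courant algebroid structures on it, with associated Leibniz 2-algebras $\mathbb E$ and $\tilde{\mathbb E}$. Then $\mathbb E$ and $\tilde{\mathbb E}$ are isomorphic.
   Context: A Courant vector bundle over a smooth manifold $M$ is a vector bundle $E\to M$ with a fibrewise nondegenerate symmetric bilinear form $\langle\cdot,\cdot\rangle$ and a bundle map $\rho:E\to TM$ such that $\rho\circ\rho^*=0$, where $\rho^*:T^*M\to E^*\cong E$ is the dual of $\rho$ followed by the identification $E^*\cong E$ via $\langle\cdot,\cdot\rangle$. A pre-Courant algebroid structure on it is an $\mathbb R$-bilinear operation $\circ$ on $\Gamma(E)$ such that for all $e_1,e_2,e_3\in\Gamma(E)$: (i) $\rho(e_1\circ e_2)=[\rho(e_1),\rho(e_2)]$; (ii) $\langle e_1\circ e_1,e_2\rangle=\frac12\rho(e_2)\langle e_1,e_1\rangle$; (iii) $\rho(e_1)\langle e_2,e_3\rangle=\langle e_1\circ e_2,e_3\rangle+\langle e_2,e_1\circ e_3\rangle$. Its Jacobiator is $J(e_1,e_2,e_3)=e_1\circ(e_2\circ e_3)-(e_1\circ e_2)\circ e_3-e_2\circ(e_1\circ e_3)$. A Leibniz 2-algebra $(V_1\xrightarrow{d}V_0,l_2,l_3)$ consists of a complex of vector spaces, bilinear $l_2:V_i\times V_j\to V_{i+j}$ ($i+j\le1$) and trilinear $l_3:V_0^{3}\to V_1$ such that for all $w,x,y,z\in V_0$, $m,n\in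 V_1$: $d\,l_2(x,m)=l_2(x,dm)$; $d\,l_2(m,x)=l_2(dm,x)$; $l_2(dm,n)=l_2(m,dn)$; $d\,l_3(x,y,z)=l_2(x,l_2(y,z))-l_2(l_2(x,y),z)-l_2(y,l_2(x,z))$; $l_3(x,y,dm)=l_2(x,l_2(y,m))-l_2(l_2(x,y),m)-l_2(y,l_2(x,m))$; $l_3(x,dm,y)=l_2(x,l_2(m,y))-l_2(l_2(x,m),y)-l_2(m,l_2(x,y))$; $l_3(dm,x,y)=l_2(m,l_2(x,y))-l_2(l_2(m,x),y)-l_2(x,l_2(m,y))$; and $l_2(w,l_3(x,y,z))-l_2(x,l_3(w,y,z))+l_2(y,l_3(w,x,z))+l_2(l_3(w,x,y),z)-l_3(l_2(w,x),y,z)-l_3(x,l_2(w,y),z)-l_3(x,y,l_2(w,z))+l_3(w,l_2(x,y),z)+l_3(w,y,l_2(x,z))-l_3(w,x,l_2(y,z))=0$. The Leibniz 2-algebra associated to a pre-Courant algebroid $(E,\langle\cdot,\cdot\rangle,\rho,\circ)$ is $V_1=\Gamma(\operatorname{Ker}\rho)\xrightarrow{i}V_0=\Gamma(E)$ ($i$ the inclusion) with $l_2(e_1,e_2)=e_1\circ e_2$, $l_2(e,\kappa)=e\circ\kappa$, $l_2(\kappa,e)=\kappa\circ e$ for $e,e_1,e_2\in\Gamma(E)$, $\kappa\in\Gamma(\operatorname{Ker}\rho)$, and $l_3=J$. A morphism from $\mathbb V$ to $\mathbb V'$ consists of linear maps $f_0:V_0\to V_0'$, $f_1:V_1\to V_1'$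 with $f_0\circ d=d'\circ f_1$ and a bilinear map $f_2:V_0\times V_0\to V_1'$ such that for all $x,y,z\in V_0$, $m\in V_1$: $l_2'(f_0x,f_0y)-f_0l_2(x,y)=d'f_2(x,y)$; $l_2'(f_0x,f_1m)-f_1l_2(x,m)=f_2(x,dm)$; $l_2'(f_1m,f_0x)-f_1l_2(m,x)=f_2(dm,x)$; and $f_1(l_3(x,y,z))+l_2'(f_0x,f_2(y,z))-l_2'(f_0y,f_2(x,z))-l_2'(f_2(x,y),f_0z)-f_2(l_2(x,y),z)+f_2(x,l_2(y,z))-f_2(y,l_2(x,z))-l_3'(f_0x,f_0y,f_0z)=0$. It is an isomorphism if $f_0$ and $f_1$ are bijective. *)

theory Defs
  imports Main "HOL.Real_Vector_Spaces"
begin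

text \<open>
  The manifold M is represented by its algebra of smooth
  functions C, a set of real-valued functions on a point type 'm.
  Smooth vector fields are derivations of C (acting on C); two vector fields
  are equal iff they agree on C; the Lie bracket is the commutator.
  Sections Gamma(E) form the real vector space 'e, which is a C-module via smul.
\<close>

definition fun_algebra :: "('m \<Rightarrow> real) set \<Rightarrow> bool" where
  "fun_algebra C \<longleftrightarrow>
     (\<forall>c. (\<lambda>_. c) \<in> C) \<and>
     (\<forall>f\<in>C. \<forall>g\<in>C. (\<lambda>p. f p + g p) \<in> C \<and> (\<lambda>p. f p * g p) \<in> C)"

definition derivation :: "('m \<Rightarrow> real) set \<Rightarrow> (('m \<Rightarrow> real) \<Rightarrow> ('m \<Rightarrow> real)) \<Rightarrow> bool" where
  "derivation C X \<longleftrightarrow>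
     (\<forall>f\<in>C. X f \<in> C) \<and>
     (\<forall>f\<in>C. \<forall>g\<in>C. X (\<lambda>p. f p + g p) = (\<lambda>p. X f p + X g p)) \<and>
     (\<forall>f\<in>C. \<forall>c. X (\<lambda>p. c * f p) = (\<lambda>p. c * X f p)) \<and>
     (\<forall>f\<in>C. \<forall>g\<in>C. X (\<lambda>p. f p * g p) = (\<lambda>p. f p * X g p + g p * X f p))"

definition courant_vector_bundle ::
  "('m \<Rightarrow> real) set \<Rightarrow> (('m \<Rightarrow> real) \<Rightarrow> 'e::real_vector \<Rightarrow> 'e)
   \<Rightarrow> ('e \<Rightarrow> 'e \<Rightarrow> 'm \<Rightarrow> real) \<Rightarrow> ('e \<Rightarrow> ('m \<Rightarrow> real) \<Rightarrow> ('m \<Rightarrow> real)) \<Rightarrow> bool" where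
  "courant_vector_bundle C smul pair rho \<longleftrightarrow>
     fun_algebra C \<and>
     \<comment> \<open>Gamma(E) is a C-module extending its real vector space structure\<close>
     (\<forall>f\<in>C. \<forall>e e'. smul f (e + e') = smul f e + smul f e') \<and>
     (\<forall>f\<in>C. \<forall>g\<in>C. \<forall>e. smul (\<lambda>p. f p + g p) e = smul f e + smul g e) \<and>
     (\<forall>f\<in>C. \<forall>g\<in>C. \<forall>e. smul (\<lambda>p. f p * g p) e = smul f (smul g e)) \<and>
     (\<forall>c e. smul (\<lambda>_. c) e = c *\<^sub>R e) \<and>
     \<comment> \<open>symmetric C-bilinear nondegenerate pairing\<close>
     (\<forall>e e'. pair e e' \<in> C) \<and>
     (\<forall>e e'. pair e e' = pair e' e) \<and>
     (\<forall>e1 e2 e3. pair (e1 + e2) e3 = (\<lambda>p. pair e1 e3 p + pair e2 e3 p)) \<and>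
     (\<forall>f\<in>C. \<forall>e1 e2. pair (smul f e1) e2 = (\<lambda>p. f p * pair e1 e2 p)) \<and>
     (\<forall>e. (\<forall>e'. pair e e' = (\<lambda>_. 0)) \<longrightarrow> e = 0) \<and>
     \<comment> \<open>anchor: C-linear map to vector fields\<close>
     (\<forall>e. derivation C (rho e)) \<and>
     (\<forall>e1 e2. \<forall>f\<in>C. rho (e1 + e2) f = (\<lambda>p. rho e1 f p + rho e2 f p)) \<and>
     (\<forall>g\<in>C. \<forall>e. \<forall>f\<in>C. rho (smul g e) f = (\<lambda>p. g p * rho e f p)) \<and>
     \<comment> \<open>rho o rho^* = 0: the section s = rho^*(df), characterised by
         pair s e = rho e f for all e, is mapped to the zero vector field\<close>
     (\<forall>f\<in>C. \<forall>s. (\<forall>e. pair s e = rho e f) \<longrightarrow> (\<forall>g\<in>C. rho s g = (\<lambda>_. 0)))"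

definition pre_courant ::
  "('m \<Rightarrow> real) set \<Rightarrow> (('m \<Rightarrow> real) \<Rightarrow> 'e::real_vector \<Rightarrow> 'e)
   \<Rightarrow> ('e \<Rightarrow> 'e \<Rightarrow> 'm \<Rightarrow> real) \<Rightarrow> ('e \<Rightarrow> ('m \<Rightarrow> real) \<Rightarrow> ('m \<Rightarrow> real))
   \<Rightarrow> ('e \<Rightarrow> 'e \<Rightarrow> 'e) \<Rightarrow> bool" where
  "pre_courant C smul pair rho circ \<longleftrightarrow>
     \<comment> \<open>R-bilinearity\<close>
     (\<forall>x y z. circ (x + y) z = circ x z + circ y z) \<and>
     (\<forall>a x z. circ (a *\<^sub>R x) z = a *\<^sub>R circ x z) \<and>
     (\<forall>x y z. circ z (x + y) = circ z x + circ z y) \<and>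
     (\<forall>a x z. circ z (a *\<^sub>R x) = a *\<^sub>R circ z x) \<and>
     \<comment> \<open>(i)\<close>
     (\<forall>e1 e2. \<forall>f\<in>C. rho (circ e1 e2) f = (\<lambda>p. rho e1 (rho e2 f) p - rho e2 (rho e1 f) p)) \<and>
     \<comment> \<open>(ii)\<close>
     (\<forall>e1 e2. pair (circ e1 e1) e2 = (\<lambda>p. rho e2 (pair e1 e1) p / 2)) \<and>
     \<comment> \<open>(iii)\<close>
     (\<forall>e1 e2 e3. rho e1 (pair e2 e3) = (\<lambda>p. pair (circ e1 e2) e3 p + pair e2 (circ e1 e3) p))"

definition jacobiator :: "('e::real_vector \<Rightarrow> 'e \<Rightarrow> 'e) \<Rightarrow> 'e \<Rightarrow> 'e \<Rightarrow> 'e \<Rightarrow> 'e" where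
  "jacobiator circ e1 e2 e3 = circ e1 (circ e2 e3) - circ (circ e1 e2) e3 - circ e2 (circ e1 e3)"

text \<open>Data of a (candidate) Leibniz 2-algebra V1 --d--> V0, with l2 split by degrees.\<close>
record ('a, 'b) leib2 =
  V0 :: "'a set"
  V1 :: "'b set"
  dif :: "'b \<Rightarrow> 'a"
  l2_00 :: "'a \<Rightarrow> 'a \<Rightarrow> 'a"
  l2_01 :: "'a \<Rightarrow> 'b \<Rightarrow> 'b"
  l2_10 :: "'b \<Rightarrow> 'a \<Rightarrow> 'b"
  l3 :: "'a \<Rightarrow> 'a \<Rightarrow> 'a \<Rightarrow> 'b"

definition ker_sections :: "('m \<Rightarrow> real) set \<Rightarrow> ('e \<Rightarrow> ('m \<Rightarrow> real) \<Rightarrow> ('m \<Rightarrow> real)) \<Rightarrow> 'e set" where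
  "ker_sections C rho = {e. \<forall>f\<in>C. rho e f = (\<lambda>_. 0)}"

definition assoc_leib2 ::
  "('m \<Rightarrow> real) set \<Rightarrow> ('e::real_vector \<Rightarrow> ('m \<Rightarrow> real) \<Rightarrow> ('m \<Rightarrow> real)) \<Rightarrow> ('e \<Rightarrow> 'e \<Rightarrow> 'e)
   \<Rightarrow> ('e, 'e) leib2" where
  "assoc_leib2 C rho circ =
     \<lparr> V0 = UNIV, V1 = ker_sections C rho, dif = id,
       l2_00 = circ, l2_01 = circ, l2_10 = circ, l3 = jacobiator circ \<rparr>"

definition leib2_morphism ::
  "('a::real_vector, 'b::real_vector) leib2 \<Rightarrow> ('c::real_vector, 'd::real_vector) leib2
   \<Rightarrow> ('a \<Rightarrow> 'c) \<Rightarrow> ('b \<Rightarrow> 'd) \<Rightarrow> ('a \<Rightarrow> 'a \<Rightarrow> 'd) \<Rightarrow> bool" where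
  "leib2_morphism A B f0 f1 f2 \<longleftrightarrow>
     f0 ` V0 A \<subseteq> V0 B \<and> f1 ` V1 A \<subseteq> V1 B \<and>
     (\<forall>x\<in>V0 A. \<forall>y\<in>V0 A. f2 x y \<in> V1 B) \<and>
     \<comment> \<open>linearity of f0, f1 and bilinearity of f2\<close>
     (\<forall>x\<in>V0 A. \<forall>y\<in>V0 A. f0 (x + y) = f0 x + f0 y) \<and>
     (\<forall>a. \<forall>x\<in>V0 A. f0 (a *\<^sub>R x) = a *\<^sub>R f0 x) \<and>
     (\<forall>m\<in>V1 A. \<forall>n\<in>V1 A. f1 (m + n) = f1 m + f1 n) \<and>
     (\<forall>a. \<forall>m\<in>V1 A. f1 (a *\<^sub>R m) = a *\<^sub>R f1 m) \<and>
     (\<forall>x\<in>V0 A. \<forall>y\<in>V0 A. \<forall>z\<in>V0 A. f2 (x + y) z = f2 x z + f2 y z \<and> f2 z (x + y) = f2 z x + f2 z y) \<and>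
     (\<forall>a. \<forall>x\<in>V0 A. \<forall>z\<in>V0 A. f2 (a *\<^sub>R x) z = a *\<^sub>R f2 x z \<and> f2 z (a *\<^sub>R x) = a *\<^sub>R f2 z x) \<and>
     \<comment> \<open>chain map\<close>
     (\<forall>m\<in>V1 A. f0 (dif A m) = dif B (f1 m)) \<and>
     \<comment> \<open>compatibility conditions\<close>
     (\<forall>x\<in>V0 A. \<forall>y\<in>V0 A.
        l2_00 B (f0 x) (f0 y) - f0 (l2_00 A x y) = dif B (f2 x y)) \<and>
     (\<forall>x\<in>V0 A. \<forall>m\<in>V1 A.
        l2_01 B (f0 x) (f1 m) - f1 (l2_01 A x m) = f2 x (dif A m)) \<and>
     (\<forall>x\<in>V0 A. \<forall>m\<in>V1 A.
        l2_10 B (f1 m) (f0 x) - f1 (l2_10 A m x) = f2 (dif A m) x) \<and>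
     (\<forall>x\<in>V0 A. \<forall>y\<in>V0 A. \<forall>z\<in>V0 A.
        f1 (l3 A x y z) + l2_01 B (f0 x) (f2 y z) - l2_01 B (f0 y) (f2 x z)
        - l2_10 B (f2 x y) (f0 z) - f2 (l2_00 A x y) z + f2 x (l2_00 A y z)
        - f2 y (l2_00 A x z) - l3 B (f0 x) (f0 y) (f0 z) = 0)"

definition leib2_isomorphism ::
  "('a::real_vector, 'b::real_vector) leib2 \<Rightarrow> ('c::real_vector, 'd::real_vector) leib2
   \<Rightarrow> ('a \<Rightarrow> 'c) \<Rightarrow> ('b \<Rightarrow> 'd) \<Rightarrow> ('a \<Rightarrow> 'a \<Rightarrow> 'd) \<Rightarrow> bool" where
  "leib2_isomorphism A B f0 f1 f2 \<longleftrightarrow>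
     leib2_morphism A B f0 f1 f2 \<and> bij_betw f0 (V0 A) (V0 B) \<and> bij_betw f1 (V1 A) (V1 B)"

definition leib2_isomorphic ::
  "('a::real_vector, 'b::real_vector) leib2 \<Rightarrow> ('c::real_vector, 'd::real_vector) leib2 \<Rightarrow> bool" where
  "leib2_isomorphic A B \<longleftrightarrow> (\<exists>f0 f1 f2. leib2_isomorphism A B f0 f1 f2)"

end

theory Submission
  imports Defs
begin

text \<open>
  Both Leibniz 2-algebras live on the same complex \<open>\<Gamma>(Ker \<rho>) \<hookrightarrow> \<Gamma>(E)\<close>, so the identity
  maps in degrees 0 and 1 are candidates for an isomorphism, with the homotopy
  \<open>f\<^sub>2(x, y) = x \<circ>' y - x \<circ> y\<close> correcting the brackets. Since both brackets satisfy the
  anchor condition (i), this difference lies in \<open>Ker \<rho>\<close>; the remaining coherence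
  condition on \<open>l\<^sub>3\<close> is then a purely algebraic identity valid for any two bilinear
  operations.
\<close>

lemma pre_courant_linear:
  assumes "pre_courant C smul pair rho circ"
  shows "linear (\<lambda>x. circ x z)" and "linear (circ z)"
  using assms by (auto simp: pre_courant_def linear_iff)

lemma pre_courant_bracket_diff_in_ker_sections:
  assumes "courant_vector_bundle C smul pair rho"
    and "pre_courant C smul pair rho circ"
    and "pre_courant C smul pair rho circ'"
  shows "circ' x y - circ x y \<in> ker_sections C rho"
  unfolding ker_sections_def
proof (intro CollectI ballI)
  fix f assume f: "f \<in> C"
  have "rho (circ' x y) f = rho (circ x y + (circ' x y - circ x y)) f"
    by simp
  also have "\<dots> = (\<lambda>p. rho (circ x y) f p + rho (circ' x y - circ x y) f p)"
    using assms(1) f unfolding courant_vector_bundle_def by blast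
  finally have "rho (circ' x y) f = (\<lambda>p. rho (circ x y) f p + rho (circ' x y - circ x y) f p)" .
  moreover have "rho (circ' x y) f = rho (circ x y) f"
    using assms(2,3) f unfolding pre_courant_def by simp
  ultimately show "rho (circ' x y - circ x y) f = (\<lambda>_. 0)"
    by (metis add_cancel_left_right fun_eq_iff)
qed

lemma jacobiator_diff_coherence:
  fixes b b' :: "'a::real_vector \<Rightarrow> 'a \<Rightarrow> 'a"
  assumes "\<And>z. linear (\<lambda>x. b x z)" "\<And>z. linear (b z)"
    and "\<And>z. linear (\<lambda>x. b' x z)" "\<And>z. linear (b' z)"
  defines "d \<equiv> \<lambda>x y. b' x y - b x y"
  shows "jacobiator b x y z + b' x (d y z) - b' y (d x z) - b' (d x y) z
           - d (b x y) z + d x (b y z) - d y (b x z) - jacobiator b' x y z = 0"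
  unfolding d_def jacobiator_def
  by (simp add: linear_diff[OF assms(1)] linear_diff[OF assms(2)]
                linear_diff[OF assms(3)] linear_diff[OF assms(4)] algebra_simps)

lemma assoc_leib2_isomorphism_id:
  fixes b b' :: "'e::real_vector \<Rightarrow> 'e \<Rightarrow> 'e"
  assumes "\<And>z. linear (\<lambda>x. b x z)" "\<And>z. linear (b z)"
    and "\<And>z. linear (\<lambda>x. b' x z)" "\<And>z. linear (b' z)"
    and "\<And>x y. b' x y - b x y \<in> ker_sections C rho"
  shows "leib2_isomorphism (assoc_leib2 C rho b) (assoc_leib2 C rho b') id id
           (\<lambda>x y. b' x y - b x y)"
  unfolding leib2_isomorphism_def leib2_morphism_def assoc_leib2_def
  using assms(5) jacobiator_diff_coherence[OF assms(1-4)]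
  by (simp add: linear_add[OF assms(1)] linear_add[OF assms(2)]
                linear_add[OF assms(3)] linear_add[OF assms(4)]
                linear_scale[OF assms(1)] linear_scale[OF assms(2)]
                linear_scale[OF assms(3)] linear_scale[OF assms(4)]
                algebra_simps scaleR_diff_right)

theorem theorem4p6:
  fixes C :: "('m \<Rightarrow> real) set"
    and smul :: "('m \<Rightarrow> real) \<Rightarrow> 'e::real_vector \<Rightarrow> 'e"
    and pair :: "'e \<Rightarrow> 'e \<Rightarrow> 'm \<Rightarrow> real"
    and rho :: "'e \<Rightarrow> ('m \<Rightarrow> real) \<Rightarrow> ('m \<Rightarrow> real)"
    and circ circ' :: "'e \<Rightarrow> 'e \<Rightarrow> 'e"
  assumes "courant_vector_bundle C smul pair rho"
    and "pre_courant C smul pair rho circ"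
    and "pre_courant C smul pair rho circ'"
  shows "leib2_isomorphic (assoc_leib2 C rho circ) (assoc_leib2 C rho circ')"
proof -
  have "leib2_isomorphism (assoc_leib2 C rho circ) (assoc_leib2 C rho circ') id id
          (\<lambda>x y. circ' x y - circ x y)"
    using assoc_leib2_isomorphism_id[OF pre_courant_linear[OF assms(2)]
        pre_courant_linear[OF assms(3)] pre_courant_bracket_diff_in_ker_sections[OF assms]] .
  then show ?thesis
    unfolding leib2_isomorphic_def by blast
qed

end
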